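(* Let $G=(V,E)$ be a connected graph with $n$ vertices and maximum degree $\Delta$, let $k\in\{2,\dots,n-1\}$, and let $\mathscr{S}$ be any $k$-block system for $G$. Then $\mu^+(\mathscr{S})\le\Delta-1+\frac1k$.
   Context: Potts configurations on $G$: $\sigma\in\Omega=[q]^V$, $q$ a positive integer. A $k$-block system for $G$ is a family $\mathscr{S}=\{S_v:v\in V\}$ of subsets of $V$ with $v\in S_v$, $|S_v|=k$ and $G[S_v]$ connected for all $v$. For $S\subseteq V$, $\partial S$ is the set of vertices of $V\setminus S$ with a neighbour in $S$. For $X\in\Omega$ and $c\in[q]^S$, $X^{(S,c)}$ equals $c$ on $S$ and $X$ off $S$; $\mu_{X,S}(c)$ is the number of monochromatic edges of $X^{(S,c)}$ incident with at least one vertex of $S$. A colour used by $c$ is free with respect to $X,S$ if it does not occur among $\{X(u):u\in\partial S\}$; $f(X,S,c)$ is the number of free colours used by $c$. $\mu^+_{X,S,f}=\max\{\mu_{X,S}(c)/(|S|-f): c\in[q]^S,\ f(X,S,c)=f\}$ (empty maximum $=0$), and $\mu^+(\mathscr{S})=\max_{S\in\mathscr{S}}\max_{X\in\Omega}\max_{f\in\{0,\dots,|S|-1\}}\mu^+_{X,S,f}$. *)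

theory Defs
  imports "HOL-Analysis.Analysis"
begin

definition simple_graph :: "'a set \<Rightarrow> ('a \<Rightarrow> 'a \<Rightarrow> bool) \<Rightarrow> bool" where
  "simple_graph V E \<longleftrightarrow> finite V \<and> (\<forall>u w. E u w \<longrightarrow> u \<in> V \<and> w \<in> V \<and> u \<noteq> w \<and> E w u)"

definition induced_connected :: "('a \<Rightarrow> 'a \<Rightarrow> bool) \<Rightarrow> 'a set \<Rightarrow> bool" where
  "induced_connected E S \<longleftrightarrow>
     (\<forall>u\<in>S. \<forall>w\<in>S. (\<lambda>x y. E x y \<and> x \<in> S \<and> y \<in> S)\<^sup>*\<^sup>* u w)"

definition graph_connected :: "'a set \<Rightarrow> ('a \<Rightarrow> 'a \<Rightarrow> bool) \<Rightarrow> bool" where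
  "graph_connected V E \<longleftrightarrow> induced_connected E V"

definition degree :: "'a set \<Rightarrow> ('a \<Rightarrow> 'a \<Rightarrow> bool) \<Rightarrow> 'a \<Rightarrow> nat" where
  "degree V E v = card {u \<in> V. E v u}"

definition max_degree :: "'a set \<Rightarrow> ('a \<Rightarrow> 'a \<Rightarrow> bool) \<Rightarrow> nat" where
  "max_degree V E = Max (degree V E ` V)"

definition block_system :: "'a set \<Rightarrow> ('a \<Rightarrow> 'a \<Rightarrow> bool) \<Rightarrow> nat \<Rightarrow> ('a \<Rightarrow> 'a set) \<Rightarrow> bool" where
  "block_system V E k Sys \<longleftrightarrow>
     (\<forall>v\<in>V. Sys v \<subseteq> V \<and> v \<in> Sys v \<and> card (Sys v) = k \<and> induced_connected E (Sys v))"

definition bdry :: "'a set \<Rightarrow> ('a \<Rightarrow> 'a \<Rightarrow> bool) \<Rightarrow> 'a set \<Rightarrow> 'a set" where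
  "bdry V E S = {u \<in> V - S. \<exists>w\<in>S. E u w}"

definition configs :: "nat \<Rightarrow> 'a set \<Rightarrow> ('a \<Rightarrow> nat) set" where
  "configs q A = A \<rightarrow>\<^sub>E {1..q}"

definition upd_conf :: "('a \<Rightarrow> nat) \<Rightarrow> 'a set \<Rightarrow> ('a \<Rightarrow> nat) \<Rightarrow> 'a \<Rightarrow> nat" where
  "upd_conf X S c = (\<lambda>u. if u \<in> S then c u else X u)"

definition mu :: "'a set \<Rightarrow> ('a \<Rightarrow> 'a \<Rightarrow> bool) \<Rightarrow> ('a \<Rightarrow> nat) \<Rightarrow> 'a set \<Rightarrow> ('a \<Rightarrow> nat) \<Rightarrow> nat" where
  "mu V E X S c = card {{u, w} | u w. E u w \<and> (u \<in> S \<or> w \<in> S)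
                         \<and> upd_conf X S c u = upd_conf X S c w}"

definition free_count :: "'a set \<Rightarrow> ('a \<Rightarrow> 'a \<Rightarrow> bool) \<Rightarrow> ('a \<Rightarrow> nat) \<Rightarrow> 'a set \<Rightarrow> ('a \<Rightarrow> nat) \<Rightarrow> nat" where
  "free_count V E X S c = card (c ` S - X ` bdry V E S)"

definition mu_plus_f :: "nat \<Rightarrow> 'a set \<Rightarrow> ('a \<Rightarrow> 'a \<Rightarrow> bool) \<Rightarrow> ('a \<Rightarrow> nat) \<Rightarrow> 'a set \<Rightarrow> nat \<Rightarrow> real" where
  "mu_plus_f q V E X S f =
     (let R = {real (mu V E X S c) / (real (card S) - real f) | c.
                 c \<in> configs q S \<and> free_count V E X S c = f}
      in if R = {} then 0 else Max R)"

definition mu_plus_sys :: "nat \<Rightarrow> 'a set \<Rightarrow> ('a \<Rightarrow> 'a \<Rightarrow> bool) \<Rightarrow> ('a \<Rightarrow> 'a set) \<Rightarrow> real" where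
  "mu_plus_sys q V E Sys =
     Max {mu_plus_f q V E X S f | S X f. S \<in> Sys ` V \<and> X \<in> configs q V \<and> f < card S}"

end

theory Submission
  imports Defs
begin

(* Fix a block S (a proper, connected vertex subset of the connected graph G) together with
   configurations X on G and c on S, and let Y = X^(S,c).  The key estimate is

     mu_{X,S}(c) <= (Delta - 1) (|S| - f) + [f = 0],    f = number of free colours used by c.

   It is proved by adding the vertices of S one at a time, each new vertex adjacent to an earlier
   one (possible because G[S] is connected), and tracking the potential
     |monochromatic edges meeting T| + (Delta - 1) * deficit(T),
   where deficit(T) = |S - T| minus the number of free colours still present on S - T.
   A vertex whose free colour disappears with it has no monochromatic edge leaving T; every other
   vertex lowers the deficit by one and adds at most Delta - 1 edges, as one of its neighbours
   (an earlier vertex, or a differently coloured one) is not counted.  The first vertex may add one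
   extra edge, but only if f = 0: otherwise connectivity of G yields a vertex of S with a free
   colour and a differently coloured neighbour.  Dividing by |S| - f gives the bound on
   mu^+_{X,S,f}, and the theorem follows by taking maxima over the block system. *)

section \<open>Connectivity and degrees\<close>

lemma rtranclp_closed:
  assumes "R\<^sup>*\<^sup>* a b" "a \<in> C" "\<And>p q. R p q \<Longrightarrow> p \<in> C \<Longrightarrow> q \<in> C"
  shows "b \<in> C"
  using assms by (induction rule: rtranclp_induct) auto

lemma connected_crossing_edge:
  assumes conn: "induced_connected E S" and sym: "\<And>a b. E a b \<Longrightarrow> E b a"
    and T: "T \<subseteq> S" "T \<noteq> {}" "T \<noteq> S"
  shows "\<exists>x\<in>S - T. \<exists>t\<in>T. E x t"
proof (rule ccontr)
  assume no_edge: "\<not> ?thesis"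
  obtain t s where ts: "t \<in> T" "s \<in> S" "s \<notin> T" using T by auto
  have "(\<lambda>x y. E x y \<and> x \<in> S \<and> y \<in> S)\<^sup>*\<^sup>* t s"
    using conn ts T(1) unfolding induced_connected_def by auto
  moreover have "\<And>p q. E p q \<and> p \<in> S \<and> q \<in> S \<Longrightarrow> p \<in> T \<Longrightarrow> q \<in> T"
    using no_edge sym by blast
  ultimately have "s \<in> T" using rtranclp_closed[of _ t s T] ts(1) by blast
  then show False using ts by simp
qed

lemma degree_le_max_degree:
  assumes "finite V" "x \<in> V"
  shows "card {u\<in>V. E x u} \<le> max_degree V E"
  using assms unfolding max_degree_def degree_def by (intro Max_ge) auto

lemma finite_configs: "finite A \<Longrightarrow> finite (configs q A)"
  unfolding configs_def by (simp add: finite_PiE)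

section \<open>The counting bound for a single block\<close>

locale block_config =
  fixes V :: "'a set" and E :: "'a \<Rightarrow> 'a \<Rightarrow> bool" and S :: "'a set" and X c :: "'a \<Rightarrow> nat"
  assumes graph: "simple_graph V E" and conn: "graph_connected V E"
    and proper: "S \<subset> V" and S_conn: "induced_connected E S" and S_ne: "S \<noteq> {}"
begin

abbreviation "Y \<equiv> upd_conf X S c"
abbreviation "D \<equiv> max_degree V E"

definition "free_cols = c ` S - X ` bdry V E S"
definition "mono_edges T = {{u, w} | u w. E u w \<and> (u \<in> T \<or> w \<in> T) \<and> Y u = Y w}"

definition "deficit T = card (S - T) - card (Y ` (S - T) \<inter> free_cols)"

text \<open>Monochromatic neighbours of x outside T: the edges gained when x joins T.\<close>
definition "mono_nbrs x T = {w. E x w \<and> Y w = Y x \<and> w \<notin> T}"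

definition "potential T = card (mono_edges T) + (D - 1) * deficit T"
definition "budget = (D - 1) * (card S - card free_cols) + (if free_cols = {} then 1 else 0)"

lemma finite_V: "finite V" using graph unfolding simple_graph_def by blast
lemma edge_endpoints: "E a b \<Longrightarrow> a \<in> V \<and> b \<in> V \<and> a \<noteq> b"
  using graph unfolding simple_graph_def by blast
lemma edge_sym: "E a b \<Longrightarrow> E b a"
  using graph unfolding simple_graph_def by blast
lemma finite_S: "finite S" using finite_V proper finite_subset by auto
lemma Y_in: "v \<in> S \<Longrightarrow> Y v = c v" by (simp add: upd_conf_def)
lemma Y_out: "v \<notin> S \<Longrightarrow> Y v = X v" by (simp add: upd_conf_def)

lemma free_cols_used: "free_cols \<subseteq> Y ` S" unfolding free_cols_def using Y_in by force

lemma finite_free_cols: "finite free_cols"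
  using free_cols_used finite_S finite_subset by blast

lemma free_colour_not_outside:
  assumes "x \<in> S" "Y x \<in> free_cols" "E x w" "w \<notin> S"
  shows "Y w \<noteq> Y x"
proof
  assume same: "Y w = Y x"
  have "w \<in> bdry V E S"
    using assms(1,4) edge_endpoints[OF assms(3)] edge_sym[OF assms(3)] unfolding bdry_def by blast
  moreover have "Y x = X w" using same Y_out[OF assms(4)] by simp
  ultimately have "Y x \<in> X ` bdry V E S" by blast
  then show False using assms(2) unfolding free_cols_def by blast
qed

lemma max_degree_pos: "1 \<le> D"
proof -
  obtain x t where "x \<in> V - S" "t \<in> S" "E x t"
    using connected_crossing_edge[of E V S] conn proper S_ne edge_sym
    unfolding graph_connected_def by blast
  then have "t \<in> {u\<in>V. E x u}" using edge_endpoints[of x t] by auto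
  then have "card {u\<in>V. E x u} > 0" using finite_V by (auto simp: card_gt_0_iff)
  then show ?thesis using degree_le_max_degree[OF finite_V, of x E] \<open>x \<in> V - S\<close> by simp
qed

definition "last_free x T \<longleftrightarrow> Y x \<in> free_cols \<and> Y x \<notin> Y ` (S - insert x T)"

lemma deficit_insert:
  assumes "x \<in> S" "x \<notin> T"
  shows "deficit T = deficit (insert x T) + (if last_free x T then 0 else 1)"
proof -
  define A where "A = S - insert x T"
  have ST: "S - T = insert x A" "x \<notin> A" "finite A"
    using assms finite_S unfolding A_def by auto
  have free_le: "card (Y ` A \<inter> free_cols) \<le> card A"
    using ST(3) card_image_le by (meson card_mono finite_imageI inf_le1 order_trans)
  have "card (Y ` (S - T) \<inter> free_cols)
        = card (Y ` A \<inter> free_cols) + (if last_free x T then 1 else 0)"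
  proof (cases "last_free x T")
    case True
    then have "Y ` (S - T) \<inter> free_cols = insert (Y x) (Y ` A \<inter> free_cols)"
      using ST(1) unfolding last_free_def A_def by auto
    then show ?thesis using True finite_free_cols unfolding last_free_def A_def by simp
  next
    case False
    then have "Y ` (S - T) \<inter> free_cols = Y ` A \<inter> free_cols"
      using ST(1) unfolding last_free_def A_def by auto
    then show ?thesis using False by simp
  qed
  then show ?thesis
    using ST free_le unfolding deficit_def A_def[symmetric] by auto
qed

lemma last_free_no_mono_nbrs:
  assumes "x \<in> S" "last_free x T"
  shows "mono_nbrs x T = {}"
proof (rule ccontr)
  assume "mono_nbrs x T \<noteq> {}"
  then obtain w where w: "E x w" "Y w = Y x" "w \<notin> T" unfolding mono_nbrs_def by auto
  show False
  proof (cases "w \<in> S")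
    case True
    then have "w \<in> S - insert x T" using w edge_endpoints[OF w(1)] by auto
    then have "Y x \<in> Y ` (S - insert x T)" by (rule rev_image_eqI) (use w(2) in simp)
    then show False using assms(2) unfolding last_free_def by blast
  next
    case False
    then show False
      using free_colour_not_outside[OF assms(1) _ w(1)] assms(2) w(2)
      unfolding last_free_def by auto
  qed
qed

lemma mono_nbrs_subset: "mono_nbrs x T \<subseteq> {u\<in>V. E x u}"
  unfolding mono_nbrs_def using edge_endpoints by auto

lemma finite_mono_nbrs: "finite (mono_nbrs x T)"
  by (rule finite_subset[OF mono_nbrs_subset]) (use finite_V in auto)

lemma card_mono_nbrs:
  assumes "x \<in> V"
  shows "card (mono_nbrs x T) \<le> D"
proof -
  have "card (mono_nbrs x T) \<le> card {u\<in>V. E x u}"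
    using mono_nbrs_subset finite_V by (intro card_mono) auto
  then show ?thesis using degree_le_max_degree[OF finite_V assms, of E] by simp
qed

lemma card_mono_nbrs_saving:
  assumes "x \<in> V" "E x w" "w \<in> T \<or> Y w \<noteq> Y x"
  shows "card (mono_nbrs x T) \<le> D - 1"
proof -
  let ?nbrs = "{u\<in>V. E x u}"
  have fin: "finite ?nbrs" using finite_V by simp
  have "mono_nbrs x T \<subseteq> ?nbrs - {w}"
    using mono_nbrs_subset assms(3) unfolding mono_nbrs_def by auto
  then have "card (mono_nbrs x T) \<le> card (?nbrs - {w})" using fin by (simp add: card_mono)
  also have "\<dots> = card ?nbrs - 1" using assms(2) edge_endpoints[OF assms(2)] fin by simp
  finally show ?thesis using degree_le_max_degree[OF finite_V assms(1), of E] by simp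
qed

lemma finite_mono_edges: "finite (mono_edges T)"
proof -
  have "mono_edges T \<subseteq> (\<lambda>(a, b). {a, b}) ` (V \<times> V)"
    unfolding mono_edges_def using edge_endpoints by fastforce
  then show ?thesis using finite_V by (meson finite_SigmaI finite_imageI finite_subset)
qed

text \<open>The new monochromatic edges when x joins T all join x to a monochromatic neighbour.\<close>
lemma card_mono_edges_insert:
  "card (mono_edges (insert x T)) \<le> card (mono_edges T) + card (mono_nbrs x T)"
proof -
  note fin_nbrs = finite_mono_nbrs[of x T]
  have "mono_edges (insert x T) \<subseteq> mono_edges T \<union> (\<lambda>w. {x, w}) ` mono_nbrs x T"
  proof
    fix e assume "e \<in> mono_edges (insert x T)"
    then obtain a b where e: "e = {a, b}" "E a b" "a \<in> insert x T \<or> b \<in> insert x T" "Y a = Y b"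
      unfolding mono_edges_def by auto
    show "e \<in> mono_edges T \<union> (\<lambda>w. {x, w}) ` mono_nbrs x T"
    proof (cases "a \<in> T \<or> b \<in> T")
      case True
      then show ?thesis using e unfolding mono_edges_def by auto
    next
      case False
      then have "(a = x \<and> b \<in> mono_nbrs x T) \<or> (b = x \<and> a \<in> mono_nbrs x T)"
        using e edge_sym[OF e(2)] unfolding mono_nbrs_def by auto
      then show ?thesis using e by auto
    qed
  qed
  then have "card (mono_edges (insert x T)) \<le> card (mono_edges T \<union> (\<lambda>w. {x, w}) ` mono_nbrs x T)"
    using finite_mono_edges fin_nbrs by (meson card_mono finite_UnI finite_imageI)
  also have "\<dots> \<le> card (mono_edges T) + card (mono_nbrs x T)"
    using card_Un_le card_image_le[OF fin_nbrs] by (meson add_left_mono order_trans)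
  finally show ?thesis .
qed

lemma potential_insert:
  assumes "x \<in> S" "x \<notin> T" and nbrs: "card (mono_nbrs x T) \<le> D - 1 + e"
  shows "potential (insert x T) \<le> potential T + e"
proof (cases "last_free x T")
  case True
  then show ?thesis
    using deficit_insert[OF assms(1,2)] last_free_no_mono_nbrs[OF assms(1)] card_mono_edges_insert[of x T]
    unfolding potential_def by simp
next
  case False
  then have "deficit T = deficit (insert x T) + 1" using deficit_insert[OF assms(1,2)] by simp
  then show ?thesis
    using card_mono_edges_insert[of x T] nbrs unfolding potential_def by (simp add: algebra_simps)
qed

lemma potential_empty: "potential {} = (D - 1) * (card S - card free_cols)"
proof -
  have "Y ` S \<inter> free_cols = free_cols" using free_cols_used by auto
  moreover have "mono_edges {} = {}" unfolding mono_edges_def by auto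
  ultimately show ?thesis unfolding potential_def deficit_def by simp
qed

lemma free_vertex_with_other_neighbour:
  assumes "free_cols \<noteq> {}"
  shows "\<exists>r\<in>S. \<exists>w. E r w \<and> Y w \<noteq> Y r"
proof -
  obtain \<gamma> where \<gamma>: "\<gamma> \<in> free_cols" using assms by auto
  define C where "C = {v\<in>S. Y v = \<gamma>}"
  have "C \<noteq> {}" "C \<subseteq> V" "C \<noteq> V" using \<gamma> free_cols_used proper unfolding C_def by auto
  then obtain x t where xt: "x \<in> V - C" "t \<in> C" "E x t"
    using connected_crossing_edge[of E V C] conn edge_sym unfolding graph_connected_def by blast
  have t: "t \<in> S" "Y t = \<gamma>" "E t x" using xt(2) edge_sym[OF xt(3)] unfolding C_def by auto
  have "Y x \<noteq> Y t"
  proof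
    assume same: "Y x = Y t"
    have "x \<notin> S" using xt(1) same t(2) unfolding C_def by auto
    then show False
      using free_colour_not_outside[OF t(1) _ t(3) \<open>x \<notin> S\<close>] same t(2) \<gamma> by auto
  qed
  then show ?thesis using t(1,3) by blast
qed

lemma root_within_budget: "\<exists>r\<in>S. potential {r} \<le> budget"
proof (cases "free_cols = {}")
  case True
  obtain r where r: "r \<in> S" using S_ne by auto
  then have "card (mono_nbrs r {}) \<le> D - 1 + 1" using card_mono_nbrs[of r "{}"] proper by auto
  then have "potential {r} \<le> potential {} + 1" using potential_insert[of r "{}" 1] r by simp
  then show ?thesis using r potential_empty True unfolding budget_def by auto
next
  case False
  then obtain r w where r: "r \<in> S" "E r w" "Y w \<noteq> Y r"
    using free_vertex_with_other_neighbour by auto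
  then have "card (mono_nbrs r {}) \<le> D - 1 + 0"
    using card_mono_nbrs_saving[of r w "{}"] proper by auto
  then have "potential {r} \<le> potential {}" using potential_insert[of r "{}" 0] r by simp
  then show ?thesis using r potential_empty False unfolding budget_def by auto
qed

lemma grow_within_budget:
  "1 \<le> n \<Longrightarrow> n \<le> card S \<Longrightarrow> \<exists>T\<subseteq>S. card T = n \<and> potential T \<le> budget"
proof (induction n)
  case 0
  then show ?case by simp
next
  case (Suc n)
  show ?case
  proof (cases "n = 0")
    case True
    then show ?thesis using root_within_budget by auto
  next
    case False
    then obtain T where T: "T \<subseteq> S" "card T = n" "potential T \<le> budget" using Suc by auto
    then have "T \<noteq> {}" "T \<noteq> S" using False Suc.prems by auto
    then obtain x t where x: "x \<in> S" "x \<notin> T" and t: "t \<in> T" "E x t"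
      using connected_crossing_edge[OF S_conn edge_sym T(1)] by blast
    have "card (mono_nbrs x T) \<le> D - 1 + 0"
      using card_mono_nbrs_saving[of x t T] x t proper by auto
    then have "potential (insert x T) \<le> budget"
      using potential_insert[of x T 0] x T(3) by simp
    moreover have "card (insert x T) = Suc n"
      using T(2) x(2) finite_subset[OF T(1) finite_S] by simp
    moreover have "insert x T \<subseteq> S" using T(1) x(1) by simp
    ultimately show ?thesis by blast
  qed
qed

theorem mu_le_budget:
  "mu V E X S c \<le> (D - 1) * (card S - free_count V E X S c)
                   + (if free_count V E X S c = 0 then 1 else 0)"
proof -
  obtain T where T: "T \<subseteq> S" "card T = card S" "potential T \<le> budget"
    using grow_within_budget[of "card S"] S_ne finite_S by (auto simp: Suc_le_eq card_gt_0_iff)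
  then have "T = S" using finite_S card_subset_eq by blast
  then have "card (mono_edges S) \<le> budget" using T unfolding potential_def by simp
  moreover have "mu V E X S c = card (mono_edges S)" unfolding mu_def mono_edges_def by simp
  moreover have "free_count V E X S c = card free_cols"
    unfolding free_count_def free_cols_def by simp
  ultimately show ?thesis unfolding budget_def using finite_free_cols by simp
qed

end

section \<open>From the counting bound to mu^+\<close>

lemma ratio_bound:
  fixes m D k f :: nat
  assumes "m \<le> (D - 1) * (k - f) + (if f = 0 then 1 else 0)" "f < k" "1 \<le> D"
  shows "real m / (real k - real f) \<le> real D - 1 + 1 / real k"
proof -
  have k: "real k > 0" using assms by simp
  have "real m \<le> real ((D - 1) * (k - f) + (if f = 0 then 1 else 0))"
    using assms(1) by (simp only: of_nat_le_iff)
  moreover have "real (D - 1) = real D - 1" "real (k - f) = real k - real f"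
    using assms(2,3) by (simp_all add: of_nat_diff)
  ultimately have "real m \<le> (real D - 1) * (real k - real f) + (if f = 0 then 1 else 0)"
    by (cases "f = 0") simp_all
  also have "\<dots> \<le> (real D - 1 + 1 / real k) * (real k - real f)"
    using assms k by (cases "f = 0") (auto simp: algebra_simps intro: mult_right_mono)
  finally show ?thesis using assms(2) by (simp add: pos_divide_le_eq)
qed

lemma mu_plus_f_le:
  assumes "finite S" "0 \<le> b"
    and ratio: "\<And>c. c \<in> configs q S \<Longrightarrow> free_count V E X S c = f \<Longrightarrow>
                   real (mu V E X S c) / (real (card S) - real f) \<le> b"
  shows "mu_plus_f q V E X S f \<le> b"
proof -
  define R where "R = {real (mu V E X S c) / (real (card S) - real f) | c.
                        c \<in> configs q S \<and> free_count V E X S c = f}"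
  have "finite R"
    using finite_configs[OF assms(1)] unfolding R_def by (simp add: Collect_mem_eq finite_image_set)
  moreover have "\<forall>r\<in>R. r \<le> b" using ratio unfolding R_def by auto
  ultimately show ?thesis unfolding mu_plus_f_def Let_def R_def[symmetric] using assms(2) by auto
qed

lemma mu_plus_sys_le:
  assumes "finite V" "q > 0" "v0 \<in> V"
    and blocks: "\<And>v. v \<in> V \<Longrightarrow> Sys v \<subseteq> V \<and> Sys v \<noteq> {}"
    and bound: "\<And>S X f. S \<in> Sys ` V \<Longrightarrow> X \<in> configs q V \<Longrightarrow> f < card S \<Longrightarrow>
                  mu_plus_f q V E X S f \<le> b"
  shows "mu_plus_sys q V E Sys \<le> b"
proof -
  define Z where "Z = {mu_plus_f q V E X S f | S X f.
                        S \<in> Sys ` V \<and> X \<in> configs q V \<and> f < card S}"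
  have "Z \<subseteq> (\<lambda>(S, X, f). mu_plus_f q V E X S f) ` (Sys ` V \<times> configs q V \<times> {..<card V})"
  proof
    fix z assume "z \<in> Z"
    then obtain S X f where z: "z = mu_plus_f q V E X S f" "S \<in> Sys ` V" "X \<in> configs q V"
      "f < card S" unfolding Z_def by blast
    moreover have "card S \<le> card V" using z(2) blocks card_mono[OF assms(1)] by blast
    ultimately have "f < card V" by simp
    then show "z \<in> (\<lambda>(S, X, f). mu_plus_f q V E X S f) ` (Sys ` V \<times> configs q V \<times> {..<card V})"
      using z by force
  qed
  then have "finite Z"
    using assms(1) finite_configs by (meson finite_SigmaI finite_imageI finite_lessThan finite_subset)
  moreover have "Z \<noteq> {}"
  proof -
    have "(\<lambda>v\<in>V. 1::nat) \<in> configs q V" unfolding configs_def using assms(2) by auto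
    moreover have "0 < card (Sys v0)"
      using blocks[OF assms(3)] finite_subset[OF _ assms(1)] by (simp add: card_gt_0_iff)
    ultimately have "mu_plus_f q V E (\<lambda>v\<in>V. 1) (Sys v0) 0 \<in> Z"
      unfolding Z_def using assms(3) by blast
    then show ?thesis by blast
  qed
  moreover have "\<forall>z\<in>Z. z \<le> b" unfolding Z_def using bound by auto
  ultimately show ?thesis unfolding mu_plus_sys_def Z_def[symmetric] by simp
qed

lemma block_mu_plus_f_le:
  assumes block: "block_config V E S" and f: "f < card S"
  shows "mu_plus_f q V E X S f \<le> real (max_degree V E) - 1 + 1 / real (card S)"
proof (rule mu_plus_f_le)
  have D: "1 \<le> max_degree V E" using block_config.max_degree_pos[OF block] .
  then show "0 \<le> real (max_degree V E) - 1 + 1 / real (card S)" by simp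
  show "finite S" using block_config.finite_S[OF block] .
  fix c assume "free_count V E X S c = f"
  then have "mu V E X S c \<le> (max_degree V E - 1) * (card S - f) + (if f = 0 then 1 else 0)"
    using block_config.mu_le_budget[OF block, of X c] by simp
  from ratio_bound[OF this f D]
  show "real (mu V E X S c) / (real (card S) - real f)
        \<le> real (max_degree V E) - 1 + 1 / real (card S)" .
qed

lemma block_system_block_config:
  assumes "simple_graph V E" "graph_connected V E" "2 \<le> k" "k < card V"
    and "block_system V E k Sys" "v \<in> V"
  shows "block_config V E (Sys v)" "card (Sys v) = k"
proof -
  have block: "Sys v \<subseteq> V" "card (Sys v) = k" "induced_connected E (Sys v)"
    using assms(5,6) unfolding block_system_def by auto
  then have "Sys v \<subset> V" "Sys v \<noteq> {}" using assms(3,4) by auto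
  then show "block_config V E (Sys v)"
    using assms(1,2) block unfolding block_config_def by blast
  show "card (Sys v) = k" by (rule block(2))
qed

theorem lemma2p6:
  fixes V :: "'a set" and E :: "'a \<Rightarrow> 'a \<Rightarrow> bool" and q k :: nat and Sys :: "'a \<Rightarrow> 'a set"
  assumes "simple_graph V E"
    and "graph_connected V E"
    and "q > 0"
    and "2 \<le> k" and "k \<le> card V - 1"
    and "block_system V E k Sys"
  shows "mu_plus_sys q V E Sys \<le> real (max_degree V E) - 1 + 1 / real k"
proof -
  have "k < card V" using assms(4,5) by linarith
  note blocks = block_system_block_config[OF assms(1,2,4) this assms(6)]
  obtain v0 where v0: "v0 \<in> V" using \<open>k < card V\<close> by fastforce
  show ?thesis
  proof (rule mu_plus_sys_le[OF _ assms(3) v0])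
    show "finite V" using assms(1) unfolding simple_graph_def by blast
    show "Sys v \<subseteq> V \<and> Sys v \<noteq> {}" if "v \<in> V" for v
      using block_config.proper[OF blocks(1)[OF that]] block_config.S_ne[OF blocks(1)[OF that]] by blast
    fix S X f assume "S \<in> Sys ` V" "f < card S"
    then show "mu_plus_f q V E X S f \<le> real (max_degree V E) - 1 + 1 / real k"
      using block_mu_plus_f_le blocks by blast
  qed
qed

end
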